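(* Under Assumption 1, for any samples $\theta_1,\dots,\theta_M\in\Theta$, the mapping $F$ is monotone on $\mathcal X\times\Delta_M$, i.e. $(u-v)^\top(F(u)-F(v))\ge0$ for all $u,v\in\mathcal X\times\Delta_M$.
   Context: Let $\mathcal N=\{1,\dots,N\}$; agent $i$ chooses $x_i\in\mathcal X_i\subset\mathbb R^n$, $x=(x_i)_{i}\in\mathcal X=\mathcal X_1\times\cdots\times\mathcal X_N\subset\mathbb R^{nN}$, $x_{-i}=(x_j)_{j\ne i}$. Let $\Theta$ be a set, $f_i:\mathbb R^{nN}\to\mathbb R$, $g:\mathbb R^{nN}\times\Theta\to\mathbb R$. Assumption 1: (i) for every $\theta\in\Theta$ and every $x_{-i}\in\prod_{j\ne i}\mathcal X_j$, $f_i(\cdot,x_{-i})+g(\cdot,x_{-i},\theta)$ is convex and continuously differentiable, and each $\mathcal X_i$ is nonempty, compact and convex; (ii) for every $\theta$ and $i$, $g(\cdot,\theta)$ and $f_i$ are twice differentiable on an open convex set containing $\mathcal X$; (iii) there are $\chi^f,\chi^g\in\mathbb R$ with $\chi^f+\chi^g\ge0$ such that for all $u,v\in\mathbb R^{nN}$ and $\theta\in\Theta$: $(u-v)^\top\big((\nabla_{u_i}f_i(u))_{i}-(\nabla_{v_i}f_i(v))_{i}\big)\ge\chi^f\|u-v\|^2$ and $(u-v)^\top(\nabla_u g(u,\theta)-\nabla_v g(v,\theta))\ge\chi^g\|u-v\|^2$. Given samples $\theta_1,\dots,\theta_M$: $\Delta_M=\{y\in\mathbb R^M: y\ge0,\ \sum_m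 y_m=1\}$, $\hat g(x,y)=\sum_{m=1}^M y_m g(x,\theta_m)$, and $F(x,y)=\big((\nabla_{x_i}f_i(x)+\nabla_{x_i}\hat g(x,y))_{i\in\mathcal N},\ -(\nabla_{y_m}\hat g(x,y))_{m=1}^M\big)\in\mathbb R^{nN+M}$. *)

theory Defs
  imports "HOL-Analysis.Analysis"
begin

definition grad :: "('a::euclidean_space \<Rightarrow> real) \<Rightarrow> 'a \<Rightarrow> 'a" where
  "grad h z = (\<Sum>b\<in>Basis. frechet_derivative h (at z) b *\<^sub>R b)"

text \<open>Joint strategy x = (x_i)_i with x_i in R^n: type real^'n^'N.
  Replace block i of x by xi.\<close>
definition upd_block :: "real^'n^'N \<Rightarrow> 'N \<Rightarrow> real^'n \<Rightarrow> real^'n^'N" where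
  "upd_block x i xi = (\<chi> j. if j = i then xi else x $ j)"

definition prod_set :: "('N \<Rightarrow> (real^'n) set) \<Rightarrow> (real^'n^'N) set" where
  "prod_set Xs = {x. \<forall>i. x $ i \<in> Xs i}"

text \<open>Probability prob_simplex Delta_M (indices of type 'm, M = CARD('m)).\<close>
definition prob_simplex :: "(real^'m::finite) set" where
  "prob_simplex = {y. (\<forall>m. 0 \<le> y $ m) \<and> (\<Sum>m\<in>UNIV. y $ m) = 1}"

definition ghat :: "(real^'n^'N \<Rightarrow> 'th \<Rightarrow> real) \<Rightarrow> ('m::finite \<Rightarrow> 'th)
                    \<Rightarrow> (real^'n^'N) \<times> (real^'m) \<Rightarrow> real" where
  "ghat g th z = (\<Sum>m\<in>UNIV. snd z $ m * g (fst z) (th m))"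

definition Fmap :: "('N \<Rightarrow> real^'n^'N \<Rightarrow> real) \<Rightarrow> (real^'n^'N \<Rightarrow> 'th \<Rightarrow> real)
                    \<Rightarrow> ('m::finite \<Rightarrow> 'th)
                    \<Rightarrow> (real^'n^'N) \<times> (real^'m) \<Rightarrow> (real^'n^'N) \<times> (real^'m)" where
  "Fmap f g th z =
     ((\<chi> i. grad (f i) (fst z) $ i + fst (grad (ghat g th) z) $ i),
      - snd (grad (ghat g th) z))"

end

theory Submission
  imports Defs
begin

text \<open>The inner product with \<open>F(u) - F(v)\<close> splits into the pseudo-gradient part of the
  \<open>f\<^sub>i\<close>, bounded below by \<open>\<chi>\<^sup>f \<parallel>x - x'\<parallel>\<^sup>2\<close>, and a saddle part coming from the convex-linear
  function \<open>\<hat>g\<close>. The saddle part is a combination, with the simplex weights \<open>y\<close> and \<open>y'\<close>,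
  of the two first-order remainders \<open>g(x', \<theta>\<^sub>m) - g(x, \<theta>\<^sub>m) - \<nabla>g(x, \<theta>\<^sub>m)\<^sup>T(x' - x)\<close> and its
  mirror image; since \<open>\<nabla>g(\<cdot>, \<theta>)\<close> is \<open>\<chi>\<^sup>g\<close>-strongly monotone each remainder is at least
  \<open>\<chi>\<^sup>g/2 \<parallel>x - x'\<parallel>\<^sup>2\<close>, so the saddle part is at least \<open>\<chi>\<^sup>g \<parallel>x - x'\<parallel>\<^sup>2\<close> and the total is
  nonnegative because \<open>\<chi>\<^sup>f + \<chi>\<^sup>g \<ge> 0\<close>.\<close>

lemma inner_grad_eq_frechet_derivative:
  assumes "h differentiable (at z)"
  shows "grad h z \<bullet> w = frechet_derivative h (at z) w"
proof -
  have lin: "linear (frechet_derivative h (at z))"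
    using assms frechet_derivative_works has_derivative_linear by blast
  have "frechet_derivative h (at z) w = frechet_derivative h (at z) (\<Sum>b\<in>Basis. (w \<bullet> b) *\<^sub>R b)"
    by (simp add: euclidean_representation)
  also have "\<dots> = (\<Sum>b\<in>Basis. (w \<bullet> b) * frechet_derivative h (at z) b)"
    by (simp add: linear_sum[OF lin] linear_scale[OF lin])
  also have "\<dots> = grad h z \<bullet> w"
    unfolding grad_def by (simp add: inner_sum_right inner_commute mult.commute)
  finally show ?thesis by simp
qed

lemma has_real_derivative_along_line:
  assumes "G differentiable (at (a + t *\<^sub>R d))"
  shows "((\<lambda>t. G (a + t *\<^sub>R d)) has_real_derivative grad G (a + t *\<^sub>R d) \<bullet> d) (at t)"
proof -
  let ?p = "a + t *\<^sub>R d"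
  have line: "((\<lambda>t. a + t *\<^sub>R d) has_derivative (\<lambda>h. h *\<^sub>R d)) (at t)"
    by (auto intro!: derivative_eq_intros)
  have DG: "(G has_derivative frechet_derivative G (at ?p)) (at ?p)"
    using assms frechet_derivative_works by blast
  from has_derivative_compose[OF line DG]
  have chain: "((\<lambda>t. G (a + t *\<^sub>R d)) has_derivative (\<lambda>h. frechet_derivative G (at ?p) (h *\<^sub>R d))) (at t)" .
  have "frechet_derivative G (at ?p) (h *\<^sub>R d) = h * (grad G ?p \<bullet> d)" for h
    using linear_scale[OF has_derivative_linear[OF DG]] inner_grad_eq_frechet_derivative[OF assms]
    by simp
  with chain have "((\<lambda>t. G (a + t *\<^sub>R d)) has_derivative (\<lambda>h. h * (grad G ?p \<bullet> d))) (at t)"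
    by simp
  then show ?thesis
    unfolding has_field_derivative_def
    by (rule has_derivative_eq_rhs) (simp add: fun_eq_iff mult.commute)
qed

lemma strongly_monotone_grad_first_order_bound:
  fixes G :: "'a::euclidean_space \<Rightarrow> real"
  assumes S: "convex S" and aS: "a \<in> S" and bS: "b \<in> S"
    and diff: "\<And>x. x \<in> S \<Longrightarrow> G differentiable (at x)"
    and mono: "\<And>u v. u \<in> S \<Longrightarrow> v \<in> S \<Longrightarrow> (u - v) \<bullet> (grad G u - grad G v) \<ge> c * (norm (u - v))\<^sup>2"
  shows "G b - G a - grad G a \<bullet> (b - a) \<ge> c/2 * (norm (b - a))\<^sup>2"
proof -
  define d where "d = b - a"
  \<comment> \<open>Strong monotonicity along the segment gives \<open>D \<xi> \<ge> D 0\<close>; the mean value theorem for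
    \<open>\<psi>\<close>, whose quadratic correction integrates \<open>c t\<close> to \<open>c/2\<close>, turns this into the claim.\<close>
  define \<psi> where "\<psi> t = G (a + t *\<^sub>R d) - c/2 * t\<^sup>2 * (norm d)\<^sup>2" for t
  define D where "D t = grad G (a + t *\<^sub>R d) \<bullet> d - c * t * (norm d)\<^sup>2" for t
  have seg: "a + t *\<^sub>R d \<in> S" if "0 \<le> t" "t \<le> 1" for t
  proof -
    have "a + t *\<^sub>R d = (1 - t) *\<^sub>R a + t *\<^sub>R b" by (simp add: d_def algebra_simps)
    then show ?thesis using convexD[OF S aS bS, of "1 - t" t] that by simp
  qed
  have "(\<psi> has_real_derivative D t) (at t)" if "0 \<le> t" "t \<le> 1" for t
    unfolding \<psi>_def D_def
    by (rule derivative_eq_intros has_real_derivative_along_line diff seg that refl)+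
       (simp add: power2_eq_square)
  then obtain \<xi> where \<xi>: "0 < \<xi>" "\<xi> < 1" and mv: "\<psi> 1 - \<psi> 0 = D \<xi>"
    using MVT2[of 0 1 \<psi> D] by auto
  have "c * (norm (\<xi> *\<^sub>R d))\<^sup>2 \<le> (\<xi> *\<^sub>R d) \<bullet> (grad G (a + \<xi> *\<^sub>R d) - grad G a)"
    using mono[OF seg aS, of \<xi>] \<xi> by simp
  then have "\<xi> * (c * \<xi> * (norm d)\<^sup>2) \<le> \<xi> * (d \<bullet> (grad G (a + \<xi> *\<^sub>R d) - grad G a))"
    using \<xi> by (simp add: power2_eq_square algebra_simps)
  then have "c * \<xi> * (norm d)\<^sup>2 \<le> d \<bullet> (grad G (a + \<xi> *\<^sub>R d) - grad G a)"
    using \<xi> by simp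
  then have "grad G a \<bullet> d \<le> D \<xi>"
    unfolding D_def by (simp add: inner_diff_right inner_commute)
  with mv show ?thesis
    unfolding \<psi>_def d_def by simp
qed

lemma inner_grad_ghat:
  fixes g :: "real^'n::finite^'N::finite \<Rightarrow> 'th \<Rightarrow> real" and th :: "'m::finite \<Rightarrow> 'th"
  assumes dm: "\<And>m. (\<lambda>x. g x (th m)) differentiable (at (fst z))"
  shows "grad (ghat g th) z \<bullet> (p, q) =
    (\<Sum>m\<in>UNIV. snd z $ m * (grad (\<lambda>x. g x (th m)) (fst z) \<bullet> p) + q $ m * g (fst z) (th m))"
proof -
  let ?Dg = "\<lambda>m. frechet_derivative (\<lambda>x. g x (th m)) (at (fst z))"
  have gm: "((\<lambda>w. g (fst w) (th m)) has_derivative (\<lambda>w. ?Dg m (fst w))) (at z)" for m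
    using has_derivative_compose[OF has_derivative_fst[OF has_derivative_ident]
        dm[of m, unfolded frechet_derivative_works]] by simp
  have sm: "((\<lambda>w. snd w $ m) has_derivative (\<lambda>w. snd w $ m)) (at z)" for m
    by (intro bounded_linear_imp_has_derivative
        bounded_linear_compose[OF bounded_linear_vec_nth bounded_linear_snd])
  have D: "(ghat g th has_derivative
     (\<lambda>w. \<Sum>m\<in>UNIV. snd z $ m * ?Dg m (fst w) + snd w $ m * g (fst z) (th m))) (at z)"
    unfolding ghat_def
    by (rule has_derivative_sum) (use has_derivative_mult[OF sm gm] in \<open>simp add: mult.commute\<close>)
  have "grad (ghat g th) z \<bullet> (p, q) = frechet_derivative (ghat g th) (at z) (p, q)"
    using inner_grad_eq_frechet_derivative D differentiableI by blast
  also have "\<dots> = (\<Sum>m\<in>UNIV. snd z $ m * ?Dg m p + q $ m * g (fst z) (th m))"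
    unfolding frechet_derivative_at[OF D, symmetric] by simp
  finally show ?thesis
    using inner_grad_eq_frechet_derivative[OF dm] by simp
qed

text \<open>The \<open>g\<close>-values enter only through \<open>\<partial>\<hat>g/\<partial>y\<close>; the sign flip in the \<open>y\<close>-block of \<open>F\<close>
  makes them pair up into the two first-order remainders.\<close>
lemma inner_diff_Fmap:
  fixes g :: "real^'n::finite^'N::finite \<Rightarrow> 'th \<Rightarrow> real" and th :: "'m::finite \<Rightarrow> 'th"
  assumes "\<And>m. (\<lambda>z. g z (th m)) differentiable (at x)"
    and "\<And>m. (\<lambda>z. g z (th m)) differentiable (at x')"
  shows "((x, y) - (x', y')) \<bullet> (Fmap f g th (x, y) - Fmap f g th (x', y')) =
    (x - x') \<bullet> ((\<chi> i. grad (f i) x $ i) - (\<chi> i. grad (f i) x' $ i)) +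
    (\<Sum>m\<in>UNIV. y $ m * (g x' (th m) - g x (th m) - grad (\<lambda>z. g z (th m)) x \<bullet> (x' - x)) +
               y' $ m * (g x (th m) - g x' (th m) - grad (\<lambda>z. g z (th m)) x' \<bullet> (x - x')))"
proof -
  let ?d = "x - x'" and ?e = "y - y'"
  have Fmap_pair: "Fmap f g th z =
      ((\<chi> i. grad (f i) (fst z) $ i) + fst (grad (ghat g th) z), - snd (grad (ghat g th) z))" for z
    unfolding Fmap_def by (simp add: vec_eq_iff)
  have inner_pair: "p \<bullet> (a, b) = fst p \<bullet> a + snd p \<bullet> b" for a b and p :: "(real^'n^'N) \<times> (real^'m)"
    by (cases p) simp
  have lhs: "((x, y) - (x', y')) \<bullet> (Fmap f g th (x, y) - Fmap f g th (x', y')) =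
      ?d \<bullet> ((\<chi> i. grad (f i) x $ i) - (\<chi> i. grad (f i) x' $ i)) +
      (grad (ghat g th) (x, y) \<bullet> (?d, - ?e) - grad (ghat g th) (x', y') \<bullet> (?d, - ?e))"
    unfolding Fmap_pair
    by (simp add: inner_pair inner_commute algebra_simps)
  have at_x: "grad (ghat g th) (x, y) \<bullet> (p, q) =
      (\<Sum>m\<in>UNIV. y $ m * (grad (\<lambda>z. g z (th m)) x \<bullet> p) + q $ m * g x (th m))" for p q
    using inner_grad_ghat[of g th "(x, y)"] assms(1) by simp
  have at_x': "grad (ghat g th) (x', y') \<bullet> (p, q) =
      (\<Sum>m\<in>UNIV. y' $ m * (grad (\<lambda>z. g z (th m)) x' \<bullet> p) + q $ m * g x' (th m))" for p q
    using inner_grad_ghat[of g th "(x', y')"] assms(2) by simp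
  have "grad (ghat g th) (x, y) \<bullet> (?d, - ?e) - grad (ghat g th) (x', y') \<bullet> (?d, - ?e) =
    (\<Sum>m\<in>UNIV. y $ m * (g x' (th m) - g x (th m) - grad (\<lambda>z. g z (th m)) x \<bullet> (x' - x)) +
               y' $ m * (g x (th m) - g x' (th m) - grad (\<lambda>z. g z (th m)) x' \<bullet> (x - x')))"
    unfolding at_x at_x' sum_subtractf[symmetric]
    by (rule sum.cong) (simp_all add: algebra_simps)
  then show ?thesis
    unfolding lhs by simp
qed

lemma prob_simplex_weighted_sum_ge:
  assumes "y \<in> prob_simplex" and "\<And>m. c \<le> a m"
  shows "c \<le> (\<Sum>m\<in>UNIV. y $ m * a m)"
proof -
  have "c = (\<Sum>m\<in>UNIV. y $ m * c)"
    using assms(1) by (simp add: prob_simplex_def flip: sum_distrib_right)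
  also have "\<dots> \<le> (\<Sum>m\<in>UNIV. y $ m * a m)"
    using assms by (intro sum_mono mult_left_mono) (auto simp: prob_simplex_def)
  finally show ?thesis .
qed

lemma convex_prod_set:
  assumes "\<And>i. convex (Xs i)"
  shows "convex (prod_set Xs)"
  using assms unfolding convex_def prod_set_def by auto

theorem lemma1:
  fixes f :: "'N::finite \<Rightarrow> real^'n::finite^'N \<Rightarrow> real"
    and g :: "real^'n^'N \<Rightarrow> 'th \<Rightarrow> real"
    and Theta :: "'th set"
    and Xs :: "'N \<Rightarrow> (real^'n) set"
    and chif chig :: real
    and th :: "'m::finite \<Rightarrow> 'th"
  assumes A1_sets: "\<And>i. Xs i \<noteq> {} \<and> compact (Xs i) \<and> convex (Xs i)"
    and A1_convex: "\<And>i x \<theta>. \<theta> \<in> Theta \<Longrightarrow> (\<forall>j. j \<noteq> i \<longrightarrow> x $ j \<in> Xs j) \<Longrightarrow>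
          convex_on UNIV (\<lambda>xi. f i (upd_block x i xi) + g (upd_block x i xi) \<theta>)"
    and A1_C1: "\<And>i x \<theta>. \<theta> \<in> Theta \<Longrightarrow> (\<forall>j. j \<noteq> i \<longrightarrow> x $ j \<in> Xs j) \<Longrightarrow>
          (\<forall>xi. (\<lambda>xi. f i (upd_block x i xi) + g (upd_block x i xi) \<theta>) differentiable (at xi))
          \<and> continuous_on UNIV (grad (\<lambda>xi. f i (upd_block x i xi) + g (upd_block x i xi) \<theta>))"
    and A2_f: "\<And>i. \<exists>U. open U \<and> convex U \<and> prod_set Xs \<subseteq> U \<and>
          (\<forall>x\<in>U. f i differentiable (at x) \<and> grad (f i) differentiable (at x))"
    and A2_g: "\<And>\<theta>. \<theta> \<in> Theta \<Longrightarrow> \<exists>U. open U \<and> convex U \<and> prod_set Xs \<subseteq> U \<and>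
          (\<forall>x\<in>U. (\<lambda>x. g x \<theta>) differentiable (at x) \<and> grad (\<lambda>x. g x \<theta>) differentiable (at x))"
    and A3_sum: "chif + chig \<ge> 0"
    and A3_f: "\<And>u v. (u - v) \<bullet> ((\<chi> i. grad (f i) u $ i) - (\<chi> i. grad (f i) v $ i))
                  \<ge> chif * (norm (u - v))\<^sup>2"
    and A3_g: "\<And>u v \<theta>. \<theta> \<in> Theta \<Longrightarrow>
          (u - v) \<bullet> (grad (\<lambda>x. g x \<theta>) u - grad (\<lambda>x. g x \<theta>) v) \<ge> chig * (norm (u - v))\<^sup>2"
    and samples: "\<And>m. th m \<in> Theta"
  shows "\<forall>u \<in> prod_set Xs \<times> prob_simplex. \<forall>v \<in> prod_set Xs \<times> prob_simplex.
           (u - v) \<bullet> (Fmap f g th u - Fmap f g th v) \<ge> 0"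
proof (clarify)
  fix x x' :: "real^'n^'N" and y y' :: "real^'m"
  assume x: "x \<in> prod_set Xs" and y: "y \<in> prob_simplex"
    and x': "x' \<in> prod_set Xs" and y': "y' \<in> prob_simplex"
  have diff: "(\<lambda>z. g z (th m)) differentiable (at z)" if "z \<in> prod_set Xs" for z m
    using A2_g[OF samples[of m]] that by blast
  have cvx: "convex (prod_set Xs)"
    using convex_prod_set A1_sets by blast
  have remainder: "chig/2 * (norm (x - x'))\<^sup>2 \<le> g b (th m) - g a (th m) - grad (\<lambda>z. g z (th m)) a \<bullet> (b - a)"
    if "a = x \<and> b = x' \<or> a = x' \<and> b = x" for a b m
  proof -
    have "a \<in> prod_set Xs" "b \<in> prod_set Xs" "norm (b - a) = norm (x - x')"
      using that x x' norm_minus_commute by auto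
    then show ?thesis
      using strongly_monotone_grad_first_order_bound[OF cvx, of a b "\<lambda>z. g z (th m)" chig]
        diff A3_g[OF samples] by simp
  qed
  have "chif * (norm (x - x'))\<^sup>2 + (chig/2 * (norm (x - x'))\<^sup>2 + chig/2 * (norm (x - x'))\<^sup>2)
      \<le> ((x, y) - (x', y')) \<bullet> (Fmap f g th (x, y) - Fmap f g th (x', y'))"
    unfolding inner_diff_Fmap[where g = g and th = th, OF diff[OF x] diff[OF x']] sum.distrib
    by (intro add_mono A3_f prob_simplex_weighted_sum_ge y y' remainder) auto
  moreover have "0 \<le> chif * (norm (x - x'))\<^sup>2 + chig * (norm (x - x'))\<^sup>2"
    using A3_sum by (simp flip: distrib_right)
  ultimately show "0 \<le> ((x, y) - (x', y')) \<bullet> (Fmap f g th (x, y) - Fmap f g th (x', y'))"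
    by linarith
qed

end
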